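(* Let $k$ be an algebraically closed field, $n\ge1$, $1\le g\le n$, let $K$ be as in the context, let $\lambda\in k\setminus\{0\}$ and $m\in\mathbb N$. Let $R_m^\lambda$ be the full subcategory of $\operatorname{rep}K$ with objects $V_d^\lambda$, $1\le d\le m+2$. Let $Q_m^\lambda$ be the quiver with vertices $(\lambda,1),\dots,(\lambda,m+2)$ and arrows $\pi_\lambda(r):(\lambda,r+1)\to(\lambda,r)$ and $\rho_\lambda(r):(\lambda,r)\to(\lambda,r+1)$ for $r=1,\dots,m+1$. Let $F_\lambda:kQ_m^\lambda\to R_m^\lambda$ be the $k$-linear functor with $F_\lambda(\lambda,r)=V_r^\lambda$, where $F_\lambda\pi_\lambda(r):V_{r+1}^\lambda\to V_r^\lambda$ is given at every vertex of $K$ by the matrix $\begin{pmatrix}\mathbf 1_r & 0\end{pmatrix}\in k^{r\times(r+1)}$ and $F_\lambda\rho_\lambda(r):V_r^\lambda\to V_{r+1}^\lambda$ is given at every vertex by $\begin{pmatrix}0\\ \mathbf 1_r\end{pmatrix}\in k^{(r+1)\times r}$. Then $F_\lambda$ induces an isomorphism between the quotient of the path category $kQ_m^\lambda$ by the ideal generated by (1) $\pi_\lambda(r+1)\circ\rho_\lambda(r+1)=\rho_\lambda(r)\circ\pi_\lambda(r)$ for $r=1,\dots,m$, and (2) $\pi_\lambda(1)\circ\rho_\lambda(1)=0$, and the $k$-category $R_m^\lambda$.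
   Context: $K$: quiver with vertices $0,\dots,n$ and arrows $\beta_x:x\to x+1$ ($0\le x\le g-1$) and $\alpha_x:x+1\to x$ ($g\le x\le n$), indices modulo $n+1$; $\operatorname{rep}K$ is the category of finite-dimensional representations. For $d\ge1$, $V_d^\lambda$ is the representation with $V_d^\lambda(x)=k^d$ at every vertex, $V_d^\lambda(\beta_{g-1})=\lambda\,\mathrm{id}_d+J_d$, and $V_d^\lambda(\gamma)=\mathrm{id}_d$ for every other arrow $\gamma$, where $J_d$ is the $d\times d$ matrix with entries $1$ directly below the diagonal and $0$ elsewhere. $\mathbf 1_r$ is the $r\times r$ identity matrix. Composition $\circ$ is written right to left (apply the right factor first). *)

theory Defs
  imports "Jordan_Normal_Form.Matrix" "HOL-Computational_Algebra.Polynomial"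
begin

datatype arrK = Beta nat | Alpha nat

definition arrowsK :: "nat \<Rightarrow> nat \<Rightarrow> arrK set" where
  "arrowsK n g = {Beta x | x. x < g} \<union> {Alpha x | x. g \<le> x \<and> x \<le> n}"

fun srcK :: "nat \<Rightarrow> arrK \<Rightarrow> nat" where
  "srcK n (Beta x) = x mod (n + 1)"
| "srcK n (Alpha x) = (x + 1) mod (n + 1)"

fun tgtK :: "nat \<Rightarrow> arrK \<Rightarrow> nat" where
  "tgtK n (Beta x) = (x + 1) mod (n + 1)"
| "tgtK n (Alpha x) = x mod (n + 1)"

text \<open>A representation of K: dimension vector and a matrix for every arrow
  (matrix acting on column vectors, size dim(target) x dim(source)).\<close>
type_synonym 'a repK = "(nat \<Rightarrow> nat) \<times> (arrK \<Rightarrow> 'a mat)"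

definition is_repK :: "nat \<Rightarrow> nat \<Rightarrow> 'a repK \<Rightarrow> bool" where
  "is_repK n g V \<longleftrightarrow> (\<forall>\<gamma>\<in>arrowsK n g.
     snd V \<gamma> \<in> carrier_mat (fst V (tgtK n \<gamma>)) (fst V (srcK n \<gamma>)))"

definition homK :: "nat \<Rightarrow> nat \<Rightarrow> 'a::comm_ring_1 repK \<Rightarrow> 'a repK \<Rightarrow> (nat \<Rightarrow> 'a mat) set" where
  "homK n g V W = {f. (\<forall>x\<le>n. f x \<in> carrier_mat (fst W x) (fst V x))
      \<and> (\<forall>x>n. f x = 0\<^sub>m 0 0)
      \<and> (\<forall>\<gamma>\<in>arrowsK n g. f (tgtK n \<gamma>) * snd V \<gamma> = snd W \<gamma> * f (srcK n \<gamma>))}"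

definition Jmat :: "nat \<Rightarrow> 'a::comm_ring_1 mat" where
  "Jmat d = mat d d (\<lambda>(i,j). if i = j + 1 then 1 else 0)"

definition Vrep :: "nat \<Rightarrow> nat \<Rightarrow> 'a::comm_ring_1 \<Rightarrow> nat \<Rightarrow> 'a repK" where
  "Vrep n g lam d = (\<lambda>_. d,
     \<lambda>\<gamma>. if \<gamma> = Beta (g - 1) then lam \<cdot>\<^sub>m 1\<^sub>m d + Jmat d else 1\<^sub>m d)"

datatype arrQ = Pi nat | Rho nat

definition arrowsQ :: "nat \<Rightarrow> arrQ set" where
  "arrowsQ m = {Pi r | r. 1 \<le> r \<and> r \<le> m + 1} \<union> {Rho r | r. 1 \<le> r \<and> r \<le> m + 1}"

fun srcQ :: "arrQ \<Rightarrow> nat" where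
  "srcQ (Pi r) = r + 1"
| "srcQ (Rho r) = r"

fun tgtQ :: "arrQ \<Rightarrow> nat" where
  "tgtQ (Pi r) = r"
| "tgtQ (Rho r) = r + 1"

text \<open>Paths are lists of arrows in order of application (first arrow applied first);
  so the composite \<open>q \<circ> p\<close> is the list \<open>p @ q\<close>.\<close>
fun is_path :: "nat \<Rightarrow> nat \<Rightarrow> nat \<Rightarrow> arrQ list \<Rightarrow> bool" where
  "is_path m s t [] \<longleftrightarrow> s = t \<and> 1 \<le> s \<and> s \<le> m + 2"
| "is_path m s t (\<gamma> # p) \<longleftrightarrow> \<gamma> \<in> arrowsQ m \<and> srcQ \<gamma> = s \<and> 1 \<le> s \<and> s \<le> m + 2
     \<and> is_path m (tgtQ \<gamma>) t p"

definition kQ :: "nat \<Rightarrow> nat \<Rightarrow> nat \<Rightarrow> (arrQ list \<Rightarrow> 'a::field) set" where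
  "kQ m d e = {c. finite {p. c p \<noteq> 0} \<and> (\<forall>p. c p \<noteq> 0 \<longrightarrow> is_path m d e p)}"

definition ind :: "arrQ list \<Rightarrow> arrQ list \<Rightarrow> 'a::field" where
  "ind p = (\<lambda>q. if q = p then 1 else 0)"

text \<open>Generators of the ideal in kQ(d,e): u \<circ> rel \<circ> v for paths v : d \<rightarrow> a, u : a \<rightarrow> e,
  where rel is one of the relations
  (1) pi(r+1) \<circ> rho(r+1) - rho(r) \<circ> pi(r)  (r = 1..m, at vertex r+1),
  (2) pi(1) \<circ> rho(1)  (at vertex 1).\<close>
definition gensI :: "nat \<Rightarrow> nat \<Rightarrow> nat \<Rightarrow> (arrQ list \<Rightarrow> 'a::field) set" where
  "gensI m d e =
     {ind (v @ [Rho (r + 1), Pi (r + 1)] @ u) - ind (v @ [Pi r, Rho r] @ u) | v u r.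
        1 \<le> r \<and> r \<le> m \<and> is_path m d (r + 1) v \<and> is_path m (r + 1) e u}
   \<union> {ind (v @ [Rho 1, Pi 1] @ u) | v u. is_path m d 1 v \<and> is_path m 1 e u}"

inductive_set idealI :: "nat \<Rightarrow> nat \<Rightarrow> nat \<Rightarrow> (arrQ list \<Rightarrow> 'a::field) set"
  for m d e where
  zero: "(\<lambda>_. 0) \<in> idealI m d e"
| step: "x \<in> idealI m d e \<Longrightarrow> y \<in> gensI m d e \<Longrightarrow> (\<lambda>p. a * y p + x p) \<in> idealI m d e"

definition Farr :: "arrQ \<Rightarrow> 'a::comm_ring_1 mat" where
  "Farr \<gamma> = (case \<gamma> of
      Pi r \<Rightarrow> mat r (r + 1) (\<lambda>(i,j). if i = j then 1 else 0)
    | Rho r \<Rightarrow> mat (r + 1) r (\<lambda>(i,j). if i = j + 1 then 1 else 0))"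

fun Mpath :: "nat \<Rightarrow> arrQ list \<Rightarrow> 'a::comm_ring_1 mat" where
  "Mpath d [] = 1\<^sub>m d"
| "Mpath d (\<gamma> # p) = Mpath (tgtQ \<gamma>) p * Farr \<gamma>"

definition Fhom :: "nat \<Rightarrow> nat \<Rightarrow> nat \<Rightarrow> (arrQ list \<Rightarrow> 'a::field) \<Rightarrow> (nat \<Rightarrow> 'a mat)" where
  "Fhom n d e c = (\<lambda>x. if x \<le> n then
      mat e d (\<lambda>(i,j). \<Sum>p\<in>{p. c p \<noteq> 0}. c p * (Mpath d p $$ (i,j)))
     else 0\<^sub>m 0 0)"

definition zero_hom :: "nat \<Rightarrow> nat \<Rightarrow> nat \<Rightarrow> (nat \<Rightarrow> 'a::comm_ring_1 mat)" where
  "zero_hom n d e = (\<lambda>x. if x \<le> n then 0\<^sub>m e d else 0\<^sub>m 0 0)"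

end

theory Submission imports Defs begin

text \<open>
  Every arrow matrix of \<open>F\<^sub>\<lambda>\<close> commutes with the nilpotent Jordan blocks \<open>J\<close>, and a morphism
  \<open>V\<^sub>d\<^sup>\<lambda> \<rightarrow> V\<^sub>e\<^sup>\<lambda>\<close> is one matrix \<open>M\<close>, the same at every vertex (all arrows but \<open>\<beta>\<^sub>g\<^sub>-\<^sub>1\<close> act as
  identities), with \<open>M (\<lambda> + J) = (\<lambda> + J) M\<close>, i.e. \<open>M J = J M\<close>. Such \<open>e \<times> d\<close> matrices are the
  lower triangular Toeplitz matrices with \<open>min d e\<close> free diagonals.

  Modulo relations (1) and (2), every path \<open>d \<rightarrow> e\<close> is zero or equal to one of the \<open>min d e\<close>
  normal paths, which descend from \<open>d\<close> to some \<open>l\<close> and then ascend to \<open>e\<close>: appending an arrow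
  to a normal path either keeps it normal (an ascent), or (a descent) the new arrow is commuted by
  (1) in front of the run of ascents, where it extends the descent or, at vertex \<open>1\<close>, is killed
  by (2). The
  normal paths are sent to the matrix units of the Toeplitz diagonals, which are linearly
  independent and span. Hence \<open>F\<^sub>\<lambda>\<close> is full, and an element of the kernel, being congruent to a
  combination of normal paths with zero image, lies in the ideal.
\<close>

section \<open>Matrices commuting with the nilpotent Jordan block\<close>

lemma Jmat_carrier: "Jmat d \<in> carrier_mat d d"
  by (simp add: Jmat_def)

definition shift_commuting :: "nat \<Rightarrow> nat \<Rightarrow> 'a::comm_ring_1 mat \<Rightarrow> bool" where
  "shift_commuting e d M \<longleftrightarrow> (\<forall>i<e. \<forall>j<d.
     (if j + 1 < d then M $$ (i, j + 1) else 0) = (if 0 < i then M $$ (i - 1, j) else 0))"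

lemma mult_Jmat_entry:
  assumes "M \<in> carrier_mat e d" "i < e" "j < d"
  shows "(M * Jmat d) $$ (i, j) = (if j + 1 < d then M $$ (i, j + 1) else 0)"
proof -
  have "(M * Jmat d) $$ (i, j) = (\<Sum>q\<in>{0..<d}. M $$ (i, q) * (if q = j + 1 then 1 else 0))"
    using assms by (simp add: Jmat_def scalar_prod_def)
  also have "\<dots> = (\<Sum>q\<in>{0..<d}. if q = j + 1 then M $$ (i, j + 1) else 0)"
    by (rule sum.cong) auto
  finally show ?thesis by (simp add: sum.delta)
qed

lemma Jmat_mult_entry:
  assumes "M \<in> carrier_mat e d" "i < e" "j < d"
  shows "(Jmat e * M) $$ (i, j) = (if 0 < i then M $$ (i - 1, j) else 0)"
proof -
  have "(Jmat e * M) $$ (i, j) = (\<Sum>q\<in>{0..<e}. if q = i - 1 \<and> 0 < i then M $$ (i - 1, j) else 0)"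
    using assms by (auto simp: Jmat_def scalar_prod_def intro!: sum.cong)
  then show ?thesis
    using assms by (cases i) (simp_all add: sum.delta)
qed

lemma commutes_Jmat_iff_shift_commuting:
  assumes M: "M \<in> carrier_mat e d"
  shows "M * Jmat d = Jmat e * M \<longleftrightarrow> shift_commuting e d M"
proof
  assume "M * Jmat d = Jmat e * M"
  then show "shift_commuting e d M"
    using mult_Jmat_entry[OF M] Jmat_mult_entry[OF M] unfolding shift_commuting_def by metis
next
  assume "shift_commuting e d M"
  then show "M * Jmat d = Jmat e * M"
    using M mult_Jmat_entry[OF M] Jmat_mult_entry[OF M]
    by (intro eq_matI) (auto simp: shift_commuting_def Jmat_def)
qed

lemma commutes_Jordan_block_iff:
  fixes M :: "'a::comm_ring_1 mat"
  assumes M: "M \<in> carrier_mat e d"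
  shows "M * (lam \<cdot>\<^sub>m 1\<^sub>m d + Jmat d) = (lam \<cdot>\<^sub>m 1\<^sub>m e + Jmat e) * M \<longleftrightarrow> M * Jmat d = Jmat e * M"
proof -
  have "M * (lam \<cdot>\<^sub>m 1\<^sub>m d + Jmat d) = lam \<cdot>\<^sub>m M + M * Jmat d"
    using mult_add_distrib_mat[OF M _ Jmat_carrier] mult_smult_distrib[OF M one_carrier_mat] M by simp
  moreover have "(lam \<cdot>\<^sub>m 1\<^sub>m e + Jmat e) * M = lam \<cdot>\<^sub>m M + Jmat e * M"
    using add_mult_distrib_mat[OF _ Jmat_carrier M] mult_smult_assoc_mat[OF one_carrier_mat M] M by simp
  moreover have "lam \<cdot>\<^sub>m M + A = lam \<cdot>\<^sub>m M + B \<longleftrightarrow> A = B"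
    if "A \<in> carrier_mat e d" "B \<in> carrier_mat e d" for A B
  proof
    assume H: "lam \<cdot>\<^sub>m M + A = lam \<cdot>\<^sub>m M + B"
    show "A = B"
    proof (rule eq_matI)
      fix i j assume "i < dim_row B" "j < dim_col B"
      then show "A $$ (i, j) = B $$ (i, j)"
        using arg_cong[OF H, of "\<lambda>X. X $$ (i, j)"] that M by simp
    qed (use that in auto)
  qed simp
  moreover have "M * Jmat d \<in> carrier_mat e d" "Jmat e * M \<in> carrier_mat e d"
    using mult_carrier_mat[OF M Jmat_carrier] mult_carrier_mat[OF Jmat_carrier M] by auto
  ultimately show ?thesis
    by metis
qed

lemma shift_commuting_toeplitz:
  assumes M: "shift_commuting e d M" and "j < d" "i < e"
  shows "M $$ (i, j) = (if j \<le> i then M $$ (i - j, 0) else 0)"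
  using assms(2,3)
proof (induction j arbitrary: i)
  case (Suc j)
  have "M $$ (i, Suc j) = (if 0 < i then M $$ (i - 1, j) else 0)"
    using M Suc.prems unfolding shift_commuting_def by (metis Suc_eq_plus1 Suc_lessD)
  then show ?case
    using Suc.IH[of "i - 1"] Suc.prems by (cases i) auto
qed simp

lemma shift_commuting_entry:
  assumes M: "shift_commuting e d M" and ij: "i < e" "j < d"
  shows "M $$ (i, j) = (if j \<le> i \<and> e + j - i \<le> d then M $$ (i - j, 0) else 0)"
proof (cases "j \<le> i \<and> e + j - i \<le> d")
  case False
  show ?thesis
  proof (cases "j \<le> i")
    case True
    define r where "r = i - j + d - 1"
    have r: "r < e" "d - 1 < d" "d - 1 \<le> r" "r - (d - 1) = i - j" "Suc r < e"
      using False True ij unfolding r_def by auto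
    then have "(if d - 1 + 1 < d then M $$ (Suc r, d - 1 + 1) else 0) =
               (if 0 < Suc r then M $$ (Suc r - 1, d - 1) else 0)"
      using M unfolding shift_commuting_def by blast
    then have "M $$ (r, d - 1) = 0"
      using r by simp
    then have "M $$ (i - j, 0) = 0"
      using shift_commuting_toeplitz[OF M r(2,1)] r by simp
    then show ?thesis
      using shift_commuting_toeplitz[OF M ij(2,1)] False by simp
  qed (use shift_commuting_toeplitz[OF M ij(2,1)] in simp)
qed (use shift_commuting_toeplitz[OF M ij(2,1)] in simp)

section \<open>Paths of the quiver \<open>Q\<^sub>m\<close> and their matrices\<close>

lemma sum_if_mult_if_eq:
  "(\<Sum>q\<in>{0..<n::nat}. (if P q then 1 else 0) * (if q = a then 1 else 0)) =
     (if a < n \<and> P a then 1 else (0::'a::comm_ring_1))"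
  "(\<Sum>q\<in>{0..<n::nat}. (if q = a then 1 else 0) * (if P q then 1 else 0)) =
     (if a < n \<and> P a then 1 else (0::'a::comm_ring_1))"
  by (subst sum.cong[OF refl, where h = "\<lambda>q. if q = a then (if P a then 1 else 0) else 0"];
      auto simp: sum.delta)+

lemma Farr_carrier: "Farr \<gamma> \<in> carrier_mat (tgtQ \<gamma>) (srcQ \<gamma>)"
  by (cases \<gamma>) (auto simp: Farr_def)

lemma Farr_Pi: "Farr (Pi r) = mat r (r + 1) (\<lambda>(i, j). if i = j then 1 else 0)"
  and Farr_Rho: "Farr (Rho r) = mat (r + 1) r (\<lambda>(i, j). if i = j + 1 then 1 else 0)"
  by (simp_all add: Farr_def)

lemma Farr_Pi_Rho_Suc:
  "(Farr (Pi (r + 1)) :: 'a::comm_ring_1 mat) * Farr (Rho (r + 1)) = Farr (Rho r) * Farr (Pi r)"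
  by (rule eq_matI) (auto simp: Farr_Pi Farr_Rho scalar_prod_def sum_if_mult_if_eq)

lemma Farr_Pi_Rho_1: "(Farr (Pi 1) :: 'a::comm_ring_1 mat) * Farr (Rho 1) = 0\<^sub>m 1 1"
  by (rule eq_matI) (auto simp: Farr_Pi Farr_Rho scalar_prod_def sum_if_mult_if_eq)

lemma Farr_commutes_Jmat: "Farr \<gamma> * Jmat (srcQ \<gamma>) = Jmat (tgtQ \<gamma>) * Farr \<gamma>"
proof -
  have "shift_commuting (tgtQ \<gamma>) (srcQ \<gamma>) (Farr \<gamma>)"
    by (cases \<gamma>) (auto simp: shift_commuting_def Farr_def)
  then show ?thesis
    using commutes_Jmat_iff_shift_commuting[OF Farr_carrier] by blast
qed

lemma is_path_append: "is_path m s t (p @ q) \<longleftrightarrow> (\<exists>w. is_path m s w p \<and> is_path m w t q)"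
proof (induction p arbitrary: s)
  case Nil
  have "is_path m s t q \<Longrightarrow> 1 \<le> s \<and> s \<le> m + 2"
    by (cases q) auto
  then show ?case
    by auto
qed auto

lemma is_path_range: "is_path m s t p \<Longrightarrow> 1 \<le> s \<and> s \<le> m + 2 \<and> 1 \<le> t \<and> t \<le> m + 2"
  by (induction p arbitrary: s) auto

lemma Mpath_carrier: "is_path m s t p \<Longrightarrow> (Mpath s p :: 'a::comm_ring_1 mat) \<in> carrier_mat t s"
proof (induction p arbitrary: s)
  case (Cons \<gamma> p)
  then show ?case
    using Farr_carrier[of \<gamma>] by (auto intro!: mult_carrier_mat)
qed simp

lemma Mpath_append:
  "is_path m s w p \<Longrightarrow> is_path m w t q \<Longrightarrow>
    (Mpath s (p @ q) :: 'a::comm_ring_1 mat) = Mpath w q * Mpath s p"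
proof (induction p arbitrary: s)
  case Nil
  then show ?case
    using right_mult_one_mat[OF Mpath_carrier[OF Nil(2), where 'a='a]] by simp
next
  case (Cons \<gamma> p)
  then have p: "is_path m (tgtQ \<gamma>) w p" and "srcQ \<gamma> = s"
    by auto
  then have "Mpath w q * Mpath (tgtQ \<gamma>) p * Farr \<gamma> = Mpath w q * (Mpath (tgtQ \<gamma>) p * Farr \<gamma>)"
    using Mpath_carrier[OF p] Mpath_carrier[OF Cons(3)] Farr_carrier[of \<gamma>] by (metis assoc_mult_mat)
  then show ?case
    using Cons.IH[OF p Cons(3)] by simp
qed

lemma Mpath_commutes_Jmat:
  "is_path m s t p \<Longrightarrow> (Mpath s p :: 'a::comm_ring_1 mat) * Jmat s = Jmat t * Mpath s p"
proof (induction p arbitrary: s)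
  case Nil
  then show ?case
    using Jmat_carrier[of t, where 'a='a] by simp
next
  case (Cons \<gamma> p)
  then have p: "is_path m (tgtQ \<gamma>) t p" and s: "srcQ \<gamma> = s"
    by auto
  let ?A = "Mpath (tgtQ \<gamma>) p :: 'a mat" and ?F = "Farr \<gamma> :: 'a mat"
  have A: "?A \<in> carrier_mat t (tgtQ \<gamma>)" and F: "?F \<in> carrier_mat (tgtQ \<gamma>) s"
    using Mpath_carrier[OF p] Farr_carrier[of \<gamma>] s by auto
  have FJ: "?F * Jmat s = Jmat (tgtQ \<gamma>) * ?F"
    using Farr_commutes_Jmat[of \<gamma>, where 'a='a] s by simp
  have "?A * ?F * Jmat s = ?A * (?F * Jmat s)"
    using A F Jmat_carrier by (metis assoc_mult_mat)
  also have "\<dots> = ?A * Jmat (tgtQ \<gamma>) * ?F"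
    using A F Jmat_carrier FJ by (metis assoc_mult_mat)
  also have "\<dots> = Jmat t * (?A * ?F)"
    using A F Jmat_carrier Cons.IH[OF p] by (metis assoc_mult_mat)
  finally show ?case
    by simp
qed

lemma Mpath_two_arrows: "(Mpath s [\<gamma>, \<delta>] :: 'a::comm_ring_1 mat) = Farr \<delta> * Farr \<gamma>"
  using left_mult_one_mat[OF Farr_carrier[where 'a='a]] by simp

lemma Mpath_replace_middle:
  assumes v: "is_path m s r v" and q: "is_path m r w q" "is_path m r w q'" and u: "is_path m w t u"
    and eq: "(Mpath r q :: 'a::comm_ring_1 mat) = Mpath r q'"
  shows "(Mpath s (v @ q @ u) :: 'a mat) = Mpath s (v @ q' @ u)"
proof -
  have "is_path m r t (q @ u)" "is_path m r t (q' @ u)"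
    using q u is_path_append by blast+
  then show ?thesis
    using Mpath_append[OF v] Mpath_append[OF q(1) u] Mpath_append[OF q(2) u] eq by metis
qed

lemma Mpath_middle_zero:
  assumes v: "is_path m s r v" and q: "is_path m r w q" and u: "is_path m w t u"
    and zero: "(Mpath r q :: 'a::comm_ring_1 mat) = 0\<^sub>m w r"
  shows "(Mpath s (v @ q @ u) :: 'a mat) = 0\<^sub>m t s"
proof -
  have "is_path m r t (q @ u)"
    using q u is_path_append by blast
  then have "(Mpath s (v @ q @ u) :: 'a mat) = Mpath w u * 0\<^sub>m w r * Mpath s v"
    using Mpath_append[OF v] Mpath_append[OF q u] zero by metis
  then show ?thesis
    using Mpath_carrier[OF u, where 'a='a] Mpath_carrier[OF v, where 'a='a] by simp
qed

fun down_path :: "nat \<Rightarrow> nat \<Rightarrow> arrQ list" where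
  "down_path a 0 = []"
| "down_path a (Suc k) = Pi (a - 1) # down_path (a - 1) k"

fun up_path :: "nat \<Rightarrow> nat \<Rightarrow> arrQ list" where
  "up_path a 0 = []"
| "up_path a (Suc k) = Rho a # up_path (Suc a) k"

text \<open>The path \<open>d \<rightarrow> e\<close> that descends to \<open>l\<close> and then ascends; in the paper's notation
  \<open>\<rho>(e-1) \<circ> \<dots> \<circ> \<rho>(l) \<circ> \<pi>(l) \<circ> \<dots> \<circ> \<pi>(d-1)\<close>.\<close>
definition normal_path :: "nat \<Rightarrow> nat \<Rightarrow> nat \<Rightarrow> arrQ list" where
  "normal_path d l e = down_path d (d - l) @ up_path l (e - l)"

lemma length_down_path: "length (down_path a k) = k"
  and length_up_path: "length (up_path a k) = k"
  by (induction k arbitrary: a) auto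

lemma is_path_down_path: "k + 1 \<le> a \<Longrightarrow> a \<le> m + 2 \<Longrightarrow> is_path m a (a - k) (down_path a k)"
proof (induction k arbitrary: a)
  case (Suc k)
  then show ?case
    using Suc.IH[of "a - 1"] by (auto simp: arrowsQ_def diff_diff_left)
qed simp

lemma is_path_up_path: "1 \<le> a \<Longrightarrow> a + k \<le> m + 2 \<Longrightarrow> is_path m a (a + k) (up_path a k)"
proof (induction k arbitrary: a)
  case (Suc k)
  then show ?case
    using Suc.IH[of "Suc a"] by (auto simp: arrowsQ_def)
qed simp

lemma up_path_snoc: "up_path a k @ [Rho (a + k)] = up_path a (Suc k)"
proof (induction k arbitrary: a)
  case (Suc k)
  show ?case
    using Suc.IH[of "Suc a"] by simp
qed simp

lemma down_path_snoc: "down_path a k @ [Pi (a - Suc k)] = down_path a (Suc k)"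
proof (induction k arbitrary: a)
  case (Suc k)
  show ?case
    using Suc.IH[of "a - 1"] by (simp add: diff_diff_left del: down_path.simps) (simp add: diff_diff_left)
qed simp

lemma Mpath_down_path:
  "k + 1 \<le> a \<Longrightarrow> (Mpath a (down_path a k) :: 'a::comm_ring_1 mat) =
     mat (a - k) a (\<lambda>(i, j). if i = j then 1 else 0)"
proof (induction k arbitrary: a)
  case 0
  then show ?case
    by (auto intro!: eq_matI)
next
  case (Suc k)
  then obtain b where b: "a = Suc b"
    by (cases a) auto
  then show ?case
    using Suc by (simp add: Farr_Pi, intro eq_matI) (auto simp: scalar_prod_def sum_if_mult_if_eq)
qed

lemma Mpath_up_path:
  "(Mpath a (up_path a k) :: 'a::comm_ring_1 mat) = mat (a + k) a (\<lambda>(i, j). if i = j + k then 1 else 0)"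
proof (induction k arbitrary: a)
  case 0
  then show ?case
    by (auto intro!: eq_matI)
next
  case (Suc k)
  show ?case
    by (simp add: Suc Farr_Rho, intro eq_matI) (auto simp: scalar_prod_def sum_if_mult_if_eq)
qed

lemma normal_path_inj:
  "l \<le> d \<Longrightarrow> l \<le> e \<Longrightarrow> l' \<le> d \<Longrightarrow> l' \<le> e \<Longrightarrow> normal_path d l e = normal_path d l' e \<Longrightarrow> l = l'"
  by (drule arg_cong[where f = length]) (simp add: normal_path_def length_down_path length_up_path)

lemma is_path_normal_path:
  "1 \<le> l \<Longrightarrow> l \<le> d \<Longrightarrow> l \<le> e \<Longrightarrow> d \<le> m + 2 \<Longrightarrow> e \<le> m + 2 \<Longrightarrow> is_path m d e (normal_path d l e)"
  unfolding normal_path_def is_path_append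
  using is_path_down_path[of "d - l" d m] is_path_up_path[of l "e - l" m] by (intro exI[of _ l]) auto

lemma Mpath_normal_path:
  assumes "1 \<le> l" "l \<le> d" "l \<le> e" "d \<le> m + 2" "e \<le> m + 2"
  shows "(Mpath d (normal_path d l e) :: 'a::comm_ring_1 mat) =
           mat e d (\<lambda>(i, j). if j < l \<and> i = j + (e - l) then 1 else 0)"
proof -
  have "is_path m d l (down_path d (d - l))" "is_path m l e (up_path l (e - l))"
    using is_path_down_path[of "d - l" d m] is_path_up_path[of l "e - l" m] assms by auto
  then have "(Mpath d (normal_path d l e) :: 'a mat) =
               Mpath l (up_path l (e - l)) * Mpath d (down_path d (d - l))"
    unfolding normal_path_def by (rule Mpath_append)
  also have "\<dots> = mat e l (\<lambda>(i, j). if i = j + (e - l) then 1 else 0) *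
                   mat l d (\<lambda>(i, j). if i = j then 1 else 0)"
    using assms by (simp add: Mpath_up_path Mpath_down_path)
  also have "\<dots> = mat e d (\<lambda>(i, j). if j < l \<and> i = j + (e - l) then 1 else 0)"
    by (intro eq_matI) (auto simp: scalar_prod_def sum_if_mult_if_eq)
  finally show ?thesis .
qed

section \<open>Reduction of paths modulo the ideal\<close>

lemma idealI_add: "x \<in> idealI m d e \<Longrightarrow> y \<in> idealI m d e \<Longrightarrow> (\<lambda>p. x p + y p) \<in> idealI m d e"
proof (induction x rule: idealI.induct)
  case zero
  then show ?case
    by simp
next
  case (step x y' a)
  then have "(\<lambda>p. a * y' p + (x p + y p)) \<in> idealI m d e"
    by (intro idealI.step)
  then show ?case
    by (simp add: add.assoc)
qed

lemma idealI_smult: "x \<in> idealI m d e \<Longrightarrow> (\<lambda>p. b * x p) \<in> idealI m d e"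
proof (induction x rule: idealI.induct)
  case zero
  then show ?case
    by (simp add: idealI.zero)
next
  case (step x y a)
  then have "(\<lambda>p. (b * a) * y p + b * x p) \<in> idealI m d e"
    by (intro idealI.step)
  then show ?case
    by (simp add: algebra_simps)
qed

lemma idealI_sum:
  "finite A \<Longrightarrow> (\<And>i. i \<in> A \<Longrightarrow> f i \<in> idealI m d e) \<Longrightarrow> (\<lambda>p. \<Sum>i\<in>A. f i p) \<in> idealI m d e"
proof (induction A rule: finite_induct)
  case empty
  then show ?case
    by (simp add: idealI.zero)
next
  case (insert a A)
  then have "(\<lambda>p. f a p + (\<Sum>i\<in>A. f i p)) \<in> idealI m d e"
    by (intro idealI_add) auto
  then show ?case
    using insert by simp
qed

lemma idealI_trans:
  "x - y \<in> idealI m d e \<Longrightarrow> y - z \<in> idealI m d e \<Longrightarrow> x - z \<in> idealI m d e"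
  using idealI_add[of "x - y" m d e "y - z"] by (simp add: fun_diff_def)

lemma idealI_trans_zero: "x - y \<in> idealI m d e \<Longrightarrow> y \<in> idealI m d e \<Longrightarrow> x \<in> idealI m d e"
  using idealI_add[of "x - y" m d e y] by (simp add: fun_diff_def)

lemma idealI_refl: "x - x \<in> idealI m d e"
  using idealI.zero by (simp add: fun_diff_def)

lemma commutation_rel_mem_idealI:
  "1 \<le> r \<Longrightarrow> r \<le> m \<Longrightarrow> is_path m d (r + 1) v \<Longrightarrow> is_path m (r + 1) e u \<Longrightarrow>
   ind (v @ [Rho (r + 1), Pi (r + 1)] @ u) - ind (v @ [Pi r, Rho r] @ u) \<in> idealI m d e"
  using idealI.step[OF idealI.zero, of _ m d e 1] by (simp add: gensI_def) blast

lemma zero_rel_mem_idealI: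
  "is_path m d 1 v \<Longrightarrow> is_path m 1 e u \<Longrightarrow> ind (v @ [Rho 1, Pi 1] @ u) \<in> idealI m d e"
  using idealI.step[OF idealI.zero, of _ m d e 1] by (simp add: gensI_def) blast

text \<open>Using relation (1) repeatedly, a descending arrow is moved in front of a run of ascending ones.\<close>
lemma up_path_Pi_congruent:
  assumes "1 \<le> b" "b + k + 1 \<le> m + 2" "is_path m d (b + 1) v" "is_path m (b + k) e u"
  shows "ind (v @ up_path (b + 1) k @ [Pi (b + k)] @ u) - ind (v @ [Pi b] @ up_path b k @ u)
           \<in> (idealI m d e :: (arrQ list \<Rightarrow> 'a::field) set)"
  using assms
proof (induction k arbitrary: b v)
  case 0
  then show ?case
    by (simp add: idealI.zero)
next
  case (Suc k)
  have v': "is_path m d (b + 2) (v @ [Rho (b + 1)])"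
    using Suc.prems by (auto simp: is_path_append arrowsQ_def)
  have u': "is_path m (b + 1) e (up_path (b + 1) k @ u)"
    using Suc.prems is_path_up_path[of "b + 1" k m] by (auto simp: is_path_append)
  have "ind (v @ up_path (b + 1) (Suc k) @ [Pi (b + Suc k)] @ u)
          - ind (v @ [Rho (b + 1), Pi (b + 1)] @ up_path (b + 1) k @ u) \<in> (idealI m d e :: (arrQ list \<Rightarrow> 'a) set)"
    using Suc.IH[of "b + 1" "v @ [Rho (b + 1)]"] v' Suc.prems
    by (simp add: numeral_2_eq_2 fun_diff_def)
  moreover have "ind (v @ [Rho (b + 1), Pi (b + 1)] @ up_path (b + 1) k @ u)
          - ind (v @ [Pi b] @ up_path b (Suc k) @ u) \<in> (idealI m d e :: (arrQ list \<Rightarrow> 'a) set)"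
    using commutation_rel_mem_idealI[OF Suc.prems(1) _ Suc.prems(3) u'] Suc.prems(2) by simp
  ultimately show ?case
    by (rule idealI_trans)
qed

text \<open>At the bottom vertex, relation (2) kills the path instead.\<close>
lemma up_path_Pi_mem_idealI:
  assumes "k \<le> m" "is_path m d 1 v" "is_path m (k + 1) e u"
  shows "ind (v @ up_path 1 (Suc k) @ [Pi (k + 1)] @ u) \<in> (idealI m d e :: (arrQ list \<Rightarrow> 'a::field) set)"
proof -
  have v': "is_path m d 2 (v @ [Rho 1])"
    using assms by (auto simp: is_path_append arrowsQ_def)
  have u': "is_path m 1 e (up_path 1 k @ u)"
    using assms is_path_up_path[of 1 k m] by (auto simp: is_path_append)
  have "ind (v @ up_path 1 (Suc k) @ [Pi (k + 1)] @ u) - ind (v @ [Rho 1, Pi 1] @ up_path 1 k @ u)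
          \<in> (idealI m d e :: (arrQ list \<Rightarrow> 'a) set)"
    using up_path_Pi_congruent[of 1 k m d "v @ [Rho 1]" e u] v' assms by (simp add: numeral_2_eq_2)
  moreover have "ind (v @ [Rho 1, Pi 1] @ up_path 1 k @ u) \<in> (idealI m d e :: (arrQ list \<Rightarrow> 'a) set)"
    using zero_rel_mem_idealI[OF assms(2) u'] by simp
  ultimately show ?thesis
    by (rule idealI_trans_zero)
qed

definition reduces_to_normal ::
  "nat \<Rightarrow> nat \<Rightarrow> nat \<Rightarrow> nat \<Rightarrow> arrQ list \<Rightarrow> (arrQ list \<Rightarrow> 'a::field) \<Rightarrow> bool" where
  "reduces_to_normal m d e t u x \<longleftrightarrow> x \<in> idealI m d e \<or>
     (\<exists>l. 1 \<le> l \<and> l \<le> d \<and> l \<le> t \<and> x - ind (normal_path d l t @ u) \<in> idealI m d e)"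

lemma reduces_to_normal_congruent:
  "x - y \<in> idealI m d e \<Longrightarrow> reduces_to_normal m d e t u y \<Longrightarrow> reduces_to_normal m d e t u x"
  unfolding reduces_to_normal_def using idealI_trans idealI_trans_zero by blast

lemma normal_path_Pi_reduces_to_normal:
  assumes l: "1 \<le> l" "l \<le> d" "l \<le> t + 1" and t: "1 \<le> t" "t + 1 \<le> m + 2"
    and d: "d \<le> m + 2" and u: "is_path m t e u"
  shows "reduces_to_normal m d e t u (ind (normal_path d l (t + 1) @ [Pi t] @ u))"
proof (cases "l = t + 1")
  case True
  have "down_path d (d - (t + 1)) @ [Pi t] = down_path d (d - t)"
    using down_path_snoc[of d "d - (t + 1)"] l True by (simp add: Suc_diff_Suc)
  then have "normal_path d l (t + 1) @ [Pi t] @ u = normal_path d t t @ u"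
    using True by (simp add: normal_path_def)
  then have "ind (normal_path d l (t + 1) @ [Pi t] @ u) - ind (normal_path d t t @ u) \<in> idealI m d e"
    using idealI_refl by metis
  then show ?thesis
    unfolding reduces_to_normal_def using True l t by auto
next
  case False
  define k where "k = t - l"
  have down: "is_path m d l (down_path d (d - l))"
    using is_path_down_path[of "d - l" d m] l d by simp
  have path_eq: "normal_path d l (t + 1) @ [Pi t] @ u = down_path d (d - l) @ up_path l (Suc k) @ [Pi (l + k)] @ u"
    using False l unfolding k_def normal_path_def by (simp add: Suc_diff_le)
  show ?thesis
  proof (cases "l = 1")
    case True
    then show ?thesis
      using up_path_Pi_mem_idealI[of k m d _ e u, where 'a='a] down u t False l
      unfolding reduces_to_normal_def path_eq k_def by simp
  next
    case l_ge_2: False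
    have eq: "down_path d (d - l) @ [Pi (l - 1)] @ up_path (l - 1) (Suc k) @ u = normal_path d (l - 1) t @ u"
      using down_path_snoc[of d "d - l"] l_ge_2 l False
      unfolding normal_path_def k_def by (simp add: Suc_diff_le)
    have "ind (down_path d (d - l) @ up_path l (Suc k) @ [Pi (l + k)] @ u)
        - ind (down_path d (d - l) @ [Pi (l - 1)] @ up_path (l - 1) (Suc k) @ u)
        \<in> (idealI m d e :: (arrQ list \<Rightarrow> 'a) set)"
      using up_path_Pi_congruent[of "l - 1" "Suc k" m d "down_path d (d - l)" e u, where 'a='a]
        down u l l_ge_2 False t
      unfolding k_def by simp
    then show ?thesis
      unfolding reduces_to_normal_def path_eq eq using l l_ge_2 False by (intro disjI2 exI[of _ "l - 1"]) auto
  qed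
qed

lemma normal_path_arrow_reduces_to_normal:
  assumes \<gamma>: "\<gamma> \<in> arrowsQ m" "srcQ \<gamma> = w" "tgtQ \<gamma> = t"
    and l: "1 \<le> l" "l \<le> d" "l \<le> w" and d: "d \<le> m + 2" and u: "is_path m t e u"
  shows "reduces_to_normal m d e t u (ind (normal_path d l w @ \<gamma> # u))"
proof (cases \<gamma>)
  case (Rho r)
  then have "t = w + 1" "\<gamma> = Rho w"
    using \<gamma> by auto
  then have "normal_path d l w @ \<gamma> # u = normal_path d l t @ u"
    using \<open>l \<le> w\<close> up_path_snoc[of l "w - l"] by (simp add: normal_path_def Suc_diff_le)
  then have "(ind (normal_path d l w @ \<gamma> # u) :: arrQ list \<Rightarrow> 'a) - ind (normal_path d l t @ u) \<in> idealI m d e"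
    using idealI_refl by metis
  then show ?thesis
    unfolding reduces_to_normal_def using l \<open>t = w + 1\<close> by (intro disjI2 exI[of _ l]) auto
next
  case (Pi r)
  then have "w = t + 1" "1 \<le> t" "t + 1 \<le> m + 2" "\<gamma> = Pi t"
    using \<gamma> by (auto simp: arrowsQ_def)
  then show ?thesis
    using normal_path_Pi_reduces_to_normal[OF _ _ _ _ _ d u] l by simp
qed

lemma path_reduces_to_normal:
  "is_path m d t p \<Longrightarrow> is_path m t e u \<Longrightarrow> reduces_to_normal m d e t u (ind (p @ u))"
proof (induction p arbitrary: t u rule: rev_induct)
  case Nil
  then have "t = d" "1 \<le> d"
    by auto
  moreover have "normal_path d d d = []"
    by (simp add: normal_path_def)
  ultimately show ?case
    unfolding reduces_to_normal_def using idealI_refl by (intro disjI2 exI[of _ d]) auto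
next
  case (snoc \<gamma> q)
  then obtain w where q: "is_path m d w q" and \<gamma>: "\<gamma> \<in> arrowsQ m" "srcQ \<gamma> = w" "tgtQ \<gamma> = t"
    by (auto simp: is_path_append)
  have "reduces_to_normal m d e w (\<gamma> # u) (ind (q @ \<gamma> # u) :: arrQ list \<Rightarrow> 'a)"
    using snoc.IH[OF q, of "\<gamma> # u"] snoc.prems(2) \<gamma> is_path_range[OF q] by simp
  then consider "(ind (q @ \<gamma> # u) :: arrQ list \<Rightarrow> 'a) \<in> idealI m d e"
    | l where "1 \<le> l" "l \<le> d" "l \<le> w"
      "(ind (q @ \<gamma> # u) :: arrQ list \<Rightarrow> 'a) - ind (normal_path d l w @ \<gamma> # u) \<in> idealI m d e"
    unfolding reduces_to_normal_def by auto
  then show ?case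
  proof cases
    case 1
    then show ?thesis
      unfolding reduces_to_normal_def by simp
  next
    case (2 l)
    then show ?thesis
      using normal_path_arrow_reduces_to_normal[OF \<gamma> 2(1-3) _ snoc.prems(2), where 'a='a]
        reduces_to_normal_congruent is_path_range[OF q] by fastforce
  qed
qed

section \<open>Morphisms between the representations \<open>V\<^sub>d\<^sup>\<lambda>\<close>\<close>

definition const_family :: "nat \<Rightarrow> 'a::zero mat \<Rightarrow> nat \<Rightarrow> 'a mat" where
  "const_family n M = (\<lambda>x. if x \<le> n then M else 0\<^sub>m 0 0)"

lemma srcK_le: "srcK n \<gamma> \<le> n" and tgtK_le: "tgtK n \<gamma> \<le> n"
  by (cases \<gamma>; simp add: less_Suc_eq_le[symmetric])+

lemma homK_Vrep_carrier:
  "f \<in> homK n g (Vrep n g lam d) (Vrep n g lam e) \<Longrightarrow> x \<le> n \<Longrightarrow> f x \<in> carrier_mat e d"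
  by (simp add: homK_def Vrep_def)

lemma homK_Vrep_arrow:
  assumes f: "f \<in> homK n g (Vrep n g lam d) (Vrep n g lam e)" and \<gamma>: "\<gamma> \<in> arrowsK n g"
  shows "\<gamma> \<noteq> Beta (g - 1) \<Longrightarrow> f (tgtK n \<gamma>) = f (srcK n \<gamma>)"
    and "\<gamma> = Beta (g - 1) \<Longrightarrow>
      f (tgtK n \<gamma>) * (lam \<cdot>\<^sub>m 1\<^sub>m d + Jmat d) = (lam \<cdot>\<^sub>m 1\<^sub>m e + Jmat e) * f (srcK n \<gamma>)"
proof -
  have "f (tgtK n \<gamma>) * snd (Vrep n g lam d) \<gamma> = snd (Vrep n g lam e) \<gamma> * f (srcK n \<gamma>)"
    using f \<gamma> by (simp add: homK_def)
  then show "\<gamma> \<noteq> Beta (g - 1) \<Longrightarrow> f (tgtK n \<gamma>) = f (srcK n \<gamma>)"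
    and "\<gamma> = Beta (g - 1) \<Longrightarrow>
      f (tgtK n \<gamma>) * (lam \<cdot>\<^sub>m 1\<^sub>m d + Jmat d) = (lam \<cdot>\<^sub>m 1\<^sub>m e + Jmat e) * f (srcK n \<gamma>)"
    using homK_Vrep_carrier[OF f srcK_le, of \<gamma>] homK_Vrep_carrier[OF f tgtK_le, of \<gamma>]
    by (auto simp: Vrep_def)
qed

lemma homK_Vrep_constant:
  assumes g: "1 \<le> g" "g \<le> n" and f: "f \<in> homK n g (Vrep n g lam d) (Vrep n g lam e)"
  shows "f = const_family n (f 0)"
proof -
  have up: "f x = f 0" if "x < g" for x
    using that
  proof (induction x)
    case (Suc x)
    have "Beta x \<in> arrowsK n g" "Beta x \<noteq> Beta (g - 1)" "Suc x < n + 1"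
      using Suc.prems g by (auto simp: arrowsK_def)
    then show ?case
      using homK_Vrep_arrow(1)[OF f, of "Beta x"] Suc by simp
  qed simp
  have down: "f x = f 0" if "x \<le> n" "g \<le> x" for x
    using that
  proof (induction x rule: inc_induct)
    case base
    have "Alpha n \<in> arrowsK n g"
      using g by (auto simp: arrowsK_def)
    then show ?case
      using homK_Vrep_arrow(1)[OF f, of "Alpha n"] by simp
  next
    case (step x)
    have "Alpha x \<in> arrowsK n g" "tgtK n (Alpha x) = x" "srcK n (Alpha x) = Suc x"
      using step by (auto simp: arrowsK_def)
    then show ?case
      using homK_Vrep_arrow(1)[OF f, of "Alpha x"] step by simp
  qed
  have zero: "f x = 0\<^sub>m 0 0" if "n < x" for x
    using f that by (simp add: homK_def)
  show ?thesis
  proof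
    fix x
    show "f x = const_family n (f 0) x"
      using up[of x] down[of x] zero[of x] by (cases "x \<le> n"; cases "x < g") (auto simp: const_family_def)
  qed
qed

lemma homK_Vrep_iff:
  fixes lam :: "'a::comm_ring_1"
  assumes g: "1 \<le> g" "g \<le> n"
  shows "f \<in> homK n g (Vrep n g lam d) (Vrep n g lam e) \<longleftrightarrow>
    (\<exists>M \<in> carrier_mat e d. M * Jmat d = Jmat e * M \<and> f = const_family n M)"
proof
  assume f: "f \<in> homK n g (Vrep n g lam d) (Vrep n g lam e)"
  have "Beta (g - 1) \<in> arrowsK n g"
    using g by (auto simp: arrowsK_def)
  moreover have "f (tgtK n \<gamma>) = f 0" "f (srcK n \<gamma>) = f 0" for \<gamma>
    using homK_Vrep_constant[OF g f] srcK_le tgtK_le by (metis const_family_def)+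
  ultimately have "f 0 * (lam \<cdot>\<^sub>m 1\<^sub>m d + Jmat d) = (lam \<cdot>\<^sub>m 1\<^sub>m e + Jmat e) * f 0"
    using homK_Vrep_arrow(2)[OF f] by metis
  then show "\<exists>M \<in> carrier_mat e d. M * Jmat d = Jmat e * M \<and> f = const_family n M"
    using homK_Vrep_constant[OF g f] homK_Vrep_carrier[OF f, of 0] commutes_Jordan_block_iff by blast
next
  assume "\<exists>M \<in> carrier_mat e d. M * Jmat d = Jmat e * M \<and> f = const_family n M"
  then obtain M where M: "M \<in> carrier_mat e d" "M * Jmat d = Jmat e * M" and f: "f = const_family n M"
    by blast
  then have "M * (lam \<cdot>\<^sub>m 1\<^sub>m d + Jmat d) = (lam \<cdot>\<^sub>m 1\<^sub>m e + Jmat e) * M"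
    using commutes_Jordan_block_iff by blast
  then show "f \<in> homK n g (Vrep n g lam d) (Vrep n g lam e)"
    using M srcK_le tgtK_le unfolding f homK_def Vrep_def const_family_def by auto
qed

section \<open>The functor on morphisms\<close>

definition Fmat :: "nat \<Rightarrow> nat \<Rightarrow> (arrQ list \<Rightarrow> 'a::field) \<Rightarrow> 'a mat" where
  "Fmat d e c = mat e d (\<lambda>(i, j). \<Sum>p\<in>{p. c p \<noteq> 0}. c p * (Mpath d p $$ (i, j)))"

lemma Fhom_eq_const_family: "Fhom n d e c = const_family n (Fmat d e c)"
  by (simp add: Fhom_def Fmat_def const_family_def)

lemma zero_hom_eq_const_family: "zero_hom n d e = const_family n (0\<^sub>m e d)"
  by (simp add: zero_hom_def const_family_def)

lemma const_family_inj: "const_family n M = const_family n N \<Longrightarrow> M = N"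
  by (metis const_family_def zero_le)

lemma Fmat_carrier: "Fmat d e c \<in> carrier_mat e d"
  by (simp add: Fmat_def)

lemma Fmat_superset:
  "finite S \<Longrightarrow> {p. c p \<noteq> 0} \<subseteq> S \<Longrightarrow>
    Fmat d e c = mat e d (\<lambda>(i, j). \<Sum>p\<in>S. c p * (Mpath d p $$ (i, j)))"
  unfolding Fmat_def by (intro eq_matI) (auto intro: sum.mono_neutral_left)

lemma Fmat_linear:
  assumes "finite {p. x p \<noteq> 0}" "finite {p. y p \<noteq> 0}"
  shows "Fmat d e (\<lambda>p. a * y p + x p) = a \<cdot>\<^sub>m Fmat d e y + Fmat d e x"
proof -
  let ?S = "{p. x p \<noteq> 0} \<union> {p. y p \<noteq> 0}"
  have "finite ?S" "{p. a * y p + x p \<noteq> 0} \<subseteq> ?S"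
    using assms by auto
  then show ?thesis
    using Fmat_superset[of ?S x] Fmat_superset[of ?S y] Fmat_superset[of ?S "\<lambda>p. a * y p + x p"]
    by (intro eq_matI) (auto simp: algebra_simps sum.distrib sum_distrib_left)
qed

lemma Fmat_diff_ind:
  "Fmat d e (ind p - ind q) = mat e d (\<lambda>(i, j). Mpath d p $$ (i, j) - Mpath d q $$ (i, j))"
proof -
  have "Fmat d e (ind p - ind q) =
      mat e d (\<lambda>(i, j). \<Sum>p'\<in>{p, q}. (ind p - ind q) p' * (Mpath d p' $$ (i, j)))"
    by (rule Fmat_superset) (auto simp: ind_def)
  then show ?thesis
    by (cases "p = q") (auto simp: ind_def)
qed

lemma Fmat_ind: "Fmat d e (ind p) = mat e d (\<lambda>(i, j). Mpath d p $$ (i, j))"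
proof -
  have "Fmat d e (ind p) = mat e d (\<lambda>(i, j). \<Sum>p'\<in>{p}. ind p p' * (Mpath d p' $$ (i, j)))"
    by (rule Fmat_superset) (auto simp: ind_def)
  then show ?thesis
    by (simp add: ind_def)
qed

lemma Fmat_gensI:
  assumes "y \<in> gensI m d e"
  shows "finite {p. y p \<noteq> 0} \<and> Fmat d e y = 0\<^sub>m e d"
  using assms unfolding gensI_def
proof (elim UnE CollectE exE conjE)
  fix v u r
  assume y: "y = ind (v @ [Rho (r + 1), Pi (r + 1)] @ u) - ind (v @ [Pi r, Rho r] @ u)"
    and r: "1 \<le> r" "r \<le> m" and v: "is_path m d (r + 1) v" and u: "is_path m (r + 1) e u"
  have "is_path m (r + 1) (r + 1) [Rho (r + 1), Pi (r + 1)]" "is_path m (r + 1) (r + 1) [Pi r, Rho r]"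
    using r by (auto simp: arrowsQ_def)
  moreover have "(Mpath (r + 1) [Rho (r + 1), Pi (r + 1)] :: 'a mat) = Mpath (r + 1) [Pi r, Rho r]"
    unfolding Mpath_two_arrows by (rule Farr_Pi_Rho_Suc)
  ultimately have "(Mpath d (v @ [Rho (r + 1), Pi (r + 1)] @ u) :: 'a mat) = Mpath d (v @ [Pi r, Rho r] @ u)"
    using Mpath_replace_middle[OF v _ _ u] by blast
  then show ?thesis
    unfolding y Fmat_diff_ind by (auto simp: ind_def intro!: eq_matI finite_subset[of _ "{_, _}"])
next
  fix v u
  assume y: "y = ind (v @ [Rho 1, Pi 1] @ u)" and v: "is_path m d 1 v" and u: "is_path m 1 e u"
  have "is_path m 1 1 [Rho 1, Pi 1]"
    by (auto simp: arrowsQ_def)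
  moreover have "(Mpath 1 [Rho 1, Pi 1] :: 'a mat) = 0\<^sub>m 1 1"
    unfolding Mpath_two_arrows by (rule Farr_Pi_Rho_1)
  ultimately have "(Mpath d (v @ [Rho 1, Pi 1] @ u) :: 'a mat) = 0\<^sub>m e d"
    using Mpath_middle_zero[OF v _ u] by blast
  then show ?thesis
    unfolding y Fmat_ind by (auto simp: ind_def intro!: eq_matI finite_subset[of _ "{_}"])
qed

lemma Fmat_idealI:
  "x \<in> idealI m d e \<Longrightarrow> finite {p. x p \<noteq> 0} \<and> Fmat d e x = 0\<^sub>m e d"
proof (induction x rule: idealI.induct)
  case zero
  then show ?case
    by (auto simp: Fmat_def intro!: eq_matI)
next
  case (step x y a)
  then have "finite {p. y p \<noteq> 0}" "Fmat d e y = 0\<^sub>m e d"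
    using Fmat_gensI by blast+
  moreover have "{p. a * y p + x p \<noteq> 0} \<subseteq> {p. x p \<noteq> 0} \<union> {p. y p \<noteq> 0}"
    by auto
  ultimately show ?case
    using step Fmat_linear[of x y d e a] finite_subset by (auto intro!: eq_matI)
qed

definition normal_comb :: "nat \<Rightarrow> nat \<Rightarrow> (nat \<Rightarrow> 'a::field) \<Rightarrow> arrQ list \<Rightarrow> 'a" where
  "normal_comb d e b q = (\<Sum>l\<in>{1..min d e}. b l * ind (normal_path d l e) q)"

lemma normal_comb_support: "{q. normal_comb d e b q \<noteq> 0} \<subseteq> (\<lambda>l. normal_path d l e) ` {1..min d e}"
proof
  fix q
  assume "q \<in> {q. normal_comb d e b q \<noteq> 0}"
  then have "(\<Sum>l\<in>{1..min d e}. b l * ind (normal_path d l e) q) \<noteq> 0"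
    by (simp add: normal_comb_def)
  then obtain l where "l \<in> {1..min d e}" "b l * ind (normal_path d l e) q \<noteq> 0"
    by (meson sum.neutral)
  then show "q \<in> (\<lambda>l. normal_path d l e) ` {1..min d e}"
    by (auto simp: ind_def split: if_splits)
qed

lemma normal_comb_normal_path:
  assumes "l \<in> {1..min d e}"
  shows "normal_comb d e b (normal_path d l e) = b l"
proof -
  have "normal_comb d e b (normal_path d l e) = (\<Sum>l'\<in>{1..min d e}. if l' = l then b l' else 0)"
    unfolding normal_comb_def ind_def using assms normal_path_inj[of _ d e l] by (intro sum.cong) auto
  then show ?thesis
    using assms by simp
qed

lemma normal_comb_in_kQ:
  assumes "d \<le> m + 2" "e \<le> m + 2"
  shows "normal_comb d e b \<in> kQ m d e"
proof -
  have "finite {q. normal_comb d e b q \<noteq> 0}"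
    by (rule finite_subset[OF normal_comb_support]) simp
  moreover have "is_path m d e q" if nz: "normal_comb d e b q \<noteq> 0" for q
  proof -
    obtain l where "l \<in> {1..min d e}" "q = normal_path d l e"
      using normal_comb_support[of d e b] nz by blast
    then show ?thesis
      using is_path_normal_path[of l d e m] assms by auto
  qed
  ultimately show ?thesis
    by (simp add: kQ_def)
qed


text \<open>The normal paths map to the matrix units spanning the Toeplitz matrices \<open>e \<times> d\<close>:
  the coefficient of the normal path through \<open>l\<close> sits on the diagonal \<open>i - j = e - l\<close>.\<close>
lemma Fmat_normal_comb:
  assumes d: "d \<le> m + 2" and e: "e \<le> m + 2"
  shows "Fmat d e (normal_comb d e b) =
           mat e d (\<lambda>(i, j). if j \<le> i \<and> e + j - i \<le> d then b (e + j - i) else 0)"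
proof -
  let ?L = "{1..min d e}"
  have inj: "inj_on (\<lambda>l. normal_path d l e) ?L"
    using normal_path_inj by (auto simp: inj_on_def)
  have entry: "(\<Sum>l\<in>?L. b l * (Mpath d (normal_path d l e) $$ (i, j))) =
      (if j \<le> i \<and> e + j - i \<le> d then b (e + j - i) else 0)" if ij: "i < e" "j < d" for i j
  proof -
    have "(\<Sum>l\<in>?L. b l * (Mpath d (normal_path d l e) $$ (i, j))) =
        (\<Sum>l\<in>?L. if l = e + j - i \<and> j \<le> i then b l else 0)"
    proof (rule sum.cong)
      fix l
      assume l: "l \<in> ?L"
      then have "(Mpath d (normal_path d l e) :: 'a mat) $$ (i, j) = (if j < l \<and> i = j + (e - l) then 1 else 0)"
        using Mpath_normal_path[of l d e m, where 'a='a] d e ij by simp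
      moreover have "j < l \<and> i = j + (e - l) \<longleftrightarrow> l = e + j - i \<and> j \<le> i"
        using l ij by auto
      ultimately show "b l * (Mpath d (normal_path d l e) $$ (i, j)) = (if l = e + j - i \<and> j \<le> i then b l else 0)"
        by simp
    qed simp
    then show ?thesis
      using ij by (auto simp: sum.delta)
  qed
  have "Fmat d e (normal_comb d e b) = mat e d (\<lambda>(i, j).
      \<Sum>p\<in>(\<lambda>l. normal_path d l e) ` ?L. normal_comb d e b p * (Mpath d p $$ (i, j)))"
    by (rule Fmat_superset[OF _ normal_comb_support]) simp
  also have "\<dots> = mat e d (\<lambda>(i, j).
      \<Sum>l\<in>?L. normal_comb d e b (normal_path d l e) * (Mpath d (normal_path d l e) $$ (i, j)))"
    by (simp only: sum.reindex[OF inj] comp_def)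
  also have "\<dots> = mat e d (\<lambda>(i, j). \<Sum>l\<in>?L. b l * (Mpath d (normal_path d l e) $$ (i, j)))"
    using normal_comb_normal_path[of _ d e b] by (intro cong_mat sum.cong) auto
  finally show ?thesis
    using entry by (auto intro!: eq_matI)
qed


lemma path_congruent_normal_comb:
  assumes p: "is_path m d e p"
  shows "\<exists>b. (ind p :: arrQ list \<Rightarrow> 'a::field) - normal_comb d e b \<in> idealI m d e"
proof -
  have "is_path m e e []"
    using is_path_range[OF p] by simp
  from path_reduces_to_normal[OF p this, where 'a='a]
  have "reduces_to_normal m d e e [] (ind p :: arrQ list \<Rightarrow> 'a)"
    by simp
  then consider "(ind p :: arrQ list \<Rightarrow> 'a) \<in> idealI m d e"
    | l where "l \<in> {1..min d e}" "(ind p :: arrQ list \<Rightarrow> 'a) - ind (normal_path d l e) \<in> idealI m d e"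
    unfolding reduces_to_normal_def append_Nil2 atLeastAtMost_iff min.bounded_iff by blast
  then show ?thesis
  proof cases
    case 1
    then show ?thesis
      by (intro exI[of _ "\<lambda>_. 0"]) (simp add: normal_comb_def fun_diff_def)
  next
    case (2 l)
    have "normal_comb d e (\<lambda>l'. if l' = l then 1 else 0) = (ind (normal_path d l e) :: arrQ list \<Rightarrow> 'a)"
    proof
      fix q
      have "normal_comb d e (\<lambda>l'. if l' = l then 1 else 0) q =
          (\<Sum>l'\<in>{1..min d e}. if l' = l then ind (normal_path d l e) q else 0)"
        unfolding normal_comb_def by (rule sum.cong) auto
      then show "normal_comb d e (\<lambda>l'. if l' = l then 1 else 0) q = ind (normal_path d l e) q"
        using 2(1) by simp
    qed
    then show ?thesis
      using 2 by metis
  qed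
qed

lemma kQ_congruent_normal_comb:
  fixes c :: "arrQ list \<Rightarrow> 'a::field"
  assumes c: "c \<in> kQ m d e"
  shows "\<exists>b. c - normal_comb d e b \<in> idealI m d e"
proof -
  let ?P = "{p. c p \<noteq> 0}"
  obtain B where B: "\<And>p. p \<in> ?P \<Longrightarrow> (ind p :: arrQ list \<Rightarrow> 'a) - normal_comb d e (B p) \<in> idealI m d e"
    using path_congruent_normal_comb[where 'a='a] c unfolding kQ_def by (metis (mono_tags, lifting) mem_Collect_eq)
  have "c - normal_comb d e (\<lambda>l. \<Sum>p\<in>?P. c p * B p l) =
      (\<lambda>q. \<Sum>p\<in>?P. c p * (ind p - normal_comb d e (B p)) q)"
  proof
    fix q
    have "(\<Sum>p\<in>?P. c p * ind p q) = (\<Sum>p\<in>?P. if p = q then c q else 0)"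
      by (rule sum.cong) (auto simp: ind_def)
    then have "c q = (\<Sum>p\<in>?P. c p * ind p q)"
      using c by (auto simp: kQ_def)
    moreover have "normal_comb d e (\<lambda>l. \<Sum>p\<in>?P. c p * B p l) q = (\<Sum>p\<in>?P. c p * normal_comb d e (B p) q)"
      unfolding normal_comb_def by (simp add: sum_distrib_left sum_distrib_right mult.assoc sum.swap[of _ _ ?P])
    ultimately show "(c - normal_comb d e (\<lambda>l. \<Sum>p\<in>?P. c p * B p l)) q =
        (\<Sum>p\<in>?P. c p * (ind p - normal_comb d e (B p)) q)"
      by (simp add: right_diff_distrib sum_subtractf)
  qed
  also have "\<dots> \<in> idealI m d e"
    using c by (intro idealI_sum idealI_smult B) (simp_all add: kQ_def)
  finally show ?thesis
    by blast
qed

lemma Fmat_commutes_Jmat: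
  assumes c: "c \<in> kQ m d e"
  shows "Fmat d e c * Jmat d = Jmat e * Fmat d e c"
proof -
  let ?P = "{p. c p \<noteq> 0}"
  have "shift_commuting e d (Fmat d e c)"
    unfolding shift_commuting_def
  proof (intro allI impI)
    fix i j
    assume ij: "i < e" "j < d"
    have paths: "shift_commuting e d (Mpath d p :: 'a mat)" if "p \<in> ?P" for p
    proof -
      have path: "is_path m d e p"
        using c that by (simp add: kQ_def)
      show ?thesis
        using Mpath_commutes_Jmat[OF path, where 'a='a]
          commutes_Jmat_iff_shift_commuting[OF Mpath_carrier[OF path, where 'a='a]] by simp
    qed
    have "(if j + 1 < d then Fmat d e c $$ (i, j + 1) else 0) =
        (\<Sum>p\<in>?P. c p * (if j + 1 < d then Mpath d p $$ (i, j + 1) else 0))"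
      using ij by (simp add: Fmat_def)
    also have "\<dots> = (\<Sum>p\<in>?P. c p * (if 0 < i then Mpath d p $$ (i - 1, j) else 0))"
      using paths ij unfolding shift_commuting_def by (intro sum.cong) auto
    also have "\<dots> = (if 0 < i then Fmat d e c $$ (i - 1, j) else 0)"
      using ij by (simp add: Fmat_def)
    finally show "(if j + 1 < d then Fmat d e c $$ (i, j + 1) else 0) =
        (if 0 < i then Fmat d e c $$ (i - 1, j) else 0)" .
  qed
  then show ?thesis
    using commutes_Jmat_iff_shift_commuting[OF Fmat_carrier] by blast
qed

lemma Fhom_in_homK:
  assumes "1 \<le> g" "g \<le> n" "c \<in> kQ m d e"
  shows "Fhom n d e c \<in> homK n g (Vrep n g lam d) (Vrep n g lam e)"
  using homK_Vrep_iff[OF assms(1,2)] Fmat_carrier Fmat_commutes_Jmat[OF assms(3)]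
  unfolding Fhom_eq_const_family by blast

lemma homK_Vrep_in_range_Fhom:
  fixes lam :: "'a::field"
  assumes g: "1 \<le> g" "g \<le> n" and d: "d \<le> m + 2" and e: "e \<le> m + 2"
    and f: "f \<in> homK n g (Vrep n g lam d) (Vrep n g lam e)"
  shows "\<exists>c \<in> kQ m d e. Fhom n d e c = f"
proof -
  obtain M where M: "M \<in> carrier_mat e d" "M * Jmat d = Jmat e * M" and f_eq: "f = const_family n M"
    using f homK_Vrep_iff[OF g] by blast
  then have toeplitz: "shift_commuting e d M"
    using commutes_Jmat_iff_shift_commuting by blast
  let ?c = "normal_comb d e (\<lambda>l. M $$ (e - l, 0))"
  have "Fmat d e ?c = mat e d (\<lambda>(i, j). if j \<le> i \<and> e + j - i \<le> d then M $$ (e - (e + j - i), 0) else 0)"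
    by (rule Fmat_normal_comb[OF d e])
  also have "\<dots> = M"
  proof (rule eq_matI)
    fix i j
    assume "i < dim_row M" "j < dim_col M"
    then have ij: "i < e" "j < d"
      using M(1) by auto
    then show "mat e d (\<lambda>(i, j). if j \<le> i \<and> e + j - i \<le> d then M $$ (e - (e + j - i), 0) else 0) $$ (i, j) =
        M $$ (i, j)"
      using shift_commuting_entry[OF toeplitz ij] by auto
  qed (use M(1) in auto)
  finally show ?thesis
    using normal_comb_in_kQ[OF d e, of "\<lambda>l. M $$ (e - l, 0)"]
    unfolding Fhom_eq_const_family f_eq by force
qed


text \<open>An element of the kernel is congruent to a combination of normal paths; its image has the
  coefficients on the first column, so they vanish.\<close>
lemma Fmat_eq_zero_imp_idealI:
  fixes c :: "arrQ list \<Rightarrow> 'a::field"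
  assumes d: "d \<le> m + 2" and e: "e \<le> m + 2" and c: "c \<in> kQ m d e" and zero: "Fmat d e c = 0\<^sub>m e d"
  shows "c \<in> idealI m d e"
proof -
  obtain b where b: "c - normal_comb d e b \<in> idealI m d e"
    using kQ_congruent_normal_comb[OF c] by blast
  have fin: "finite {p. c p \<noteq> 0}" "finite {p. normal_comb d e b p \<noteq> 0}"
    using c normal_comb_in_kQ[OF d e] by (auto simp: kQ_def)
  have "c - normal_comb d e b = (\<lambda>p. (-1) * normal_comb d e b p + c p)"
    by auto
  then have sum_zero: "(-1) \<cdot>\<^sub>m Fmat d e (normal_comb d e b) + Fmat d e c = 0\<^sub>m e d"
    using Fmat_idealI[OF b] Fmat_linear[OF fin, of d e "-1"] by simp
  have "b l = 0" if l: "l \<in> {1..min d e}" for l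
  proof -
    have "e - l < e" "0 < d" "e - (e - l) = l"
      using l by auto
    then have "Fmat d e (normal_comb d e b) $$ (e - l, 0) = 0"
      using arg_cong[OF sum_zero, of "\<lambda>X. X $$ (e - l, 0)"] zero Fmat_carrier[of d e "normal_comb d e b"]
      by simp
    then show ?thesis
      using Fmat_normal_comb[OF d e, of b] \<open>e - l < e\<close> \<open>0 < d\<close> \<open>e - (e - l) = l\<close> l by simp
  qed
  then have "normal_comb d e b = (\<lambda>_. 0)"
    by (auto simp: normal_comb_def intro!: sum.neutral)
  then show ?thesis
    using b by (simp add: fun_diff_def)
qed

lemma Fhom_eq_zero_hom_iff:
  fixes c :: "arrQ list \<Rightarrow> 'a::field"
  assumes d: "d \<le> m + 2" and e: "e \<le> m + 2" and c: "c \<in> kQ m d e"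
  shows "Fhom n d e c = zero_hom n d e \<longleftrightarrow> c \<in> idealI m d e"
proof -
  have "Fhom n d e c = zero_hom n d e \<longleftrightarrow> Fmat d e c = 0\<^sub>m e d"
    unfolding Fhom_eq_const_family zero_hom_eq_const_family by (auto dest: const_family_inj)
  then show ?thesis
    using Fmat_eq_zero_imp_idealI[OF d e c] Fmat_idealI by blast
qed

theorem mainTheorem4:
  fixes lam :: "'a::alg_closed_field" and n g m :: nat
  assumes "1 \<le> n" and "1 \<le> g" and "g \<le> n" and "lam \<noteq> 0"
  shows "\<forall>d\<in>{1..m+2}. \<forall>e\<in>{1..m+2}.
     (\<forall>c\<in>kQ m d e. Fhom n d e c \<in> homK n g (Vrep n g lam d) (Vrep n g lam e))
   \<and> (\<forall>f\<in>homK n g (Vrep n g lam d) (Vrep n g lam e). \<exists>c\<in>kQ m d e. Fhom n d e c = f)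
   \<and> (\<forall>c::arrQ list \<Rightarrow> 'a\<in>kQ m d e. Fhom n d e c = zero_hom n d e \<longleftrightarrow> c \<in> idealI m d e)"
proof (intro ballI conjI)
  fix d e
  assume "d \<in> {1..m+2}" "e \<in> {1..m+2}"
  then have d: "d \<le> m + 2" and e: "e \<le> m + 2"
    by auto
  show "Fhom n d e c \<in> homK n g (Vrep n g lam d) (Vrep n g lam e)" if "c \<in> kQ m d e" for c
    using Fhom_in_homK[OF assms(2,3) that] .
  show "\<exists>c\<in>kQ m d e. Fhom n d e c = f" if "f \<in> homK n g (Vrep n g lam d) (Vrep n g lam e)" for f
    using homK_Vrep_in_range_Fhom[OF assms(2,3) d e that] .
  show "Fhom n d e c = zero_hom n d e \<longleftrightarrow> c \<in> idealI m d e" if "c \<in> kQ m d e" for c :: "arrQ list \<Rightarrow> 'a"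
    using Fhom_eq_zero_hom_iff[OF d e that] .
qed

end
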